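(* Let $B\in\mathbb{R}^{n\times n}$ be symmetric, partitioned into $p\times p$ blocks $B_{st}\in\mathbb{R}^{n_s\times n_t}$, and let $\hat B$ be its strictly block upper triangular part ($\hat B_{st}=B_{st}$ if $s<t$, $0$ otherwise). If $\lambda_{\max}(B)>0$, then for every $\beta\in(0,\frac1{\rho(B)})$ there is at least one nonzero eigenvalue $\lambda$ of $\beta(I_n+\beta\hat B)^{-1}B$ such that $$\frac1\lambda\in\Xi(\beta,B)=\left\{a+bi:\ a,b\in\mathbb{R},\ a\ge\frac12+\frac{1-\beta\rho(B)}{\beta\rho(B)}\right\}.$$
   Context: $n_1,\dots,n_p$ are positive integers with $\sum_sn_s=n$; $\rho(B)$ denotes the spectral radius of $B$ and $\lambda_{\max}(B)$ its largest eigenvalue. *)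

theory Defs
  imports "Jordan_Normal_Form.Spectral_Radius"
begin

text \<open>Block index of row/column i for a partition with block sizes ns = [n_1,...,n_p]
  (0-based): the unique s with n_1+...+n_s \<le> i < n_1+...+n_(s+1).\<close>
definition block_idx :: "nat list \<Rightarrow> nat \<Rightarrow> nat" where
  "block_idx ns i = (LEAST s. i < sum_list (take (Suc s) ns))"

definition strict_block_upper :: "nat list \<Rightarrow> 'a::zero mat \<Rightarrow> 'a mat" where
  "strict_block_upper ns B = mat (dim_row B) (dim_col B)
     (\<lambda>(i,j). if block_idx ns i < block_idx ns j then B $$ (i,j) else 0)"

text \<open>Matrix inverse of a square matrix (meaningful when it is invertible).\<close>
definition inv_mat :: "'a::field mat \<Rightarrow> 'a mat" where
  "inv_mat A = (SOME X. X \<in> carrier_mat (dim_row A) (dim_row A) \<and>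
                 A * X = 1\<^sub>m (dim_row A) \<and> X * A = 1\<^sub>m (dim_row A))"

definition lambda_max :: "real mat \<Rightarrow> real" where
  "lambda_max B = Max {x. eigenvalue B x}"

definition rho :: "real mat \<Rightarrow> real" where
  "rho B = spectral_radius (map_mat complex_of_real B)"

end

theory Submission
  imports Defs
begin

text \<open>Write \<open>K = I + \<beta> U\<close> with \<open>U\<close> the strictly block upper part and \<open>D\<close> the block
  diagonal part of \<open>B\<close>. The Hermitian part of \<open>K\<close> is \<open>I + \<beta> (B - D) / 2\<close>; since both
  \<open>|y\<^sup>*By|\<close> and \<open>y\<^sup>*Dy\<close> are at most \<open>\<rho>(B) |y|\<^sup>2\<close> and \<open>\<beta> \<rho>(B) < 1\<close>, it is positive
  definite. Eigenvalues of \<open>\<beta> K\<^sup>-\<^sup>1 B\<close> are the eigenvalues \<open>\<mu>\<close> of the pencil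
  \<open>\<beta> B y = \<mu> K y\<close>. As \<open>\<lambda>\<^sub>m\<^sub>a\<^sub>x(B) > 0\<close>, the form \<open>y\<^sup>*By\<close> takes a positive value, and an
  inertia argument (induction on the dimension, deflating one eigenvector of the pencil by a
  congruence) produces an eigenvalue \<open>\<mu>\<close> with \<open>Re \<mu> > 0\<close>. For its eigenvector \<open>y\<close> we have
  \<open>\<mu> y\<^sup>*Ky = \<beta> y\<^sup>*By\<close>, so \<open>Re (1/\<mu>) = (|y|\<^sup>2 + \<beta> (y\<^sup>*By - y\<^sup>*Dy)/2) / (\<beta> y\<^sup>*By)\<close>, and the
  two bounds give the estimate.\<close>

section \<open>Matrices as functions on indices\<close>

text \<open>A \<open>k \<times> k\<close> matrix is a function \<open>nat \<Rightarrow> nat \<Rightarrow> complex\<close> and a vector a function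
  \<open>nat \<Rightarrow> complex\<close>, of which only the values at indices below \<open>k\<close> matter. This keeps the
  deletion and insertion of indices in the deflation argument elementary; matrices of type
  \<open>mat\<close> enter only through \<open>entries\<close>.\<close>

definition matvec :: "nat \<Rightarrow> (nat \<Rightarrow> nat \<Rightarrow> complex) \<Rightarrow> (nat \<Rightarrow> complex) \<Rightarrow> nat \<Rightarrow> complex" where
  "matvec k A y i = (\<Sum>j<k. A i j * y j)"

definition qform :: "nat \<Rightarrow> (nat \<Rightarrow> nat \<Rightarrow> complex) \<Rightarrow> (nat \<Rightarrow> complex) \<Rightarrow> complex" where
  "qform k A y = (\<Sum>i<k. \<Sum>j<k. cnj (y i) * A i j * y j)"

definition sqnorm :: "nat \<Rightarrow> (nat \<Rightarrow> complex) \<Rightarrow> real" where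
  "sqnorm k y = (\<Sum>i<k. (cmod (y i))\<^sup>2)"

definition nonzero_vec :: "nat \<Rightarrow> (nat \<Rightarrow> complex) \<Rightarrow> bool" where
  "nonzero_vec k y \<longleftrightarrow> (\<exists>i<k. y i \<noteq> 0)"

definition hermitian_fun :: "nat \<Rightarrow> (nat \<Rightarrow> nat \<Rightarrow> complex) \<Rightarrow> bool" where
  "hermitian_fun k A \<longleftrightarrow> (\<forall>i<k. \<forall>j<k. A i j = cnj (A j i))"

lemma hermitian_fun_cnj:
  "hermitian_fun k A \<longleftrightarrow> (\<forall>i<k. \<forall>j<k. cnj (A j i) = A i j)"
  unfolding hermitian_fun_def by (metis complex_cnj_cnj)

definition strictly_accretive :: "nat \<Rightarrow> (nat \<Rightarrow> nat \<Rightarrow> complex) \<Rightarrow> bool" where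
  "strictly_accretive k A \<longleftrightarrow> (\<forall>y. nonzero_vec k y \<longrightarrow> 0 < Re (qform k A y))"

definition id_fun :: "nat \<Rightarrow> nat \<Rightarrow> complex" where
  "id_fun i j = (if i = j then 1 else 0)"

definition entries :: "complex mat \<Rightarrow> nat \<Rightarrow> nat \<Rightarrow> complex" where
  "entries M i j = M $$ (i, j)"

lemma qform_eq_sum_matvec: "qform k A y = (\<Sum>i<k. cnj (y i) * matvec k A y i)"
  unfolding qform_def matvec_def by (simp add: sum_distrib_left mult.assoc)

lemma matvec_cong:
  assumes "\<And>j. j < k \<Longrightarrow> A i j = A' i j" and "\<And>j. j < k \<Longrightarrow> y j = y' j"
  shows "matvec k A y i = matvec k A' y' i"
  unfolding matvec_def using assms by (intro sum.cong) auto

lemma qform_cong: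
  assumes "\<And>i j. i < k \<Longrightarrow> j < k \<Longrightarrow> A i j = A' i j" and "\<And>i. i < k \<Longrightarrow> y i = y' i"
  shows "qform k A y = qform k A' y'"
  unfolding qform_def using assms by (intro sum.cong) auto

lemma qform_add: "qform k (\<lambda>i j. A i j + A' i j) y = qform k A y + qform k A' y"
  unfolding qform_def by (simp add: algebra_simps sum.distrib)

lemma qform_diff: "qform k (\<lambda>i j. A i j - A' i j) y = qform k A y - qform k A' y"
  unfolding qform_def by (simp add: algebra_simps sum_subtractf)

lemma qform_scale: "qform k (\<lambda>i j. c * A i j) y = c * qform k A y"
  unfolding qform_def by (simp add: sum_distrib_left mult_ac)

lemma matvec_diff: "matvec k (\<lambda>i j. A i j - A' i j) y i = matvec k A y i - matvec k A' y i"
  unfolding matvec_def by (simp add: algebra_simps sum_subtractf)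

lemma matvec_scale: "matvec k (\<lambda>i j. c * A i j) y i = c * matvec k A y i"
  unfolding matvec_def by (simp add: sum_distrib_left mult_ac)

lemma matvec_id_fun:
  assumes "i < k"
  shows "matvec k id_fun y i = y i"
proof -
  have "matvec k id_fun y i = (\<Sum>j<k. if i = j then y j else 0)"
    unfolding matvec_def id_fun_def by (intro sum.cong) auto
  with assms show ?thesis by simp
qed

lemma qform_id_fun: "qform k id_fun y = complex_of_real (sqnorm k y)"
proof -
  have "qform k id_fun y = (\<Sum>i<k. cnj (y i) * y i)"
    unfolding qform_eq_sum_matvec by (intro sum.cong) (simp_all add: matvec_id_fun)
  also have "\<dots> = complex_of_real (sqnorm k y)"
    unfolding sqnorm_def of_real_sum by (intro sum.cong refl) (metis complex_norm_square mult.commute)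
  finally show ?thesis .
qed

lemma sqnorm_pos:
  assumes "nonzero_vec k y"
  shows "0 < sqnorm k y"
proof -
  obtain i where "i < k" "y i \<noteq> 0" using assms unfolding nonzero_vec_def by blast
  then have "0 < (cmod (y i))\<^sup>2" and "(cmod (y i))\<^sup>2 \<le> sqnorm k y"
    unfolding sqnorm_def by (auto intro: member_le_sum)
  then show ?thesis by linarith
qed

lemma strictly_accretive_id_fun: "strictly_accretive k id_fun"
  unfolding strictly_accretive_def qform_id_fun by (simp add: sqnorm_pos)

lemma cnj_qform: "cnj (qform k A y) = qform k (\<lambda>i j. cnj (A j i)) y"
proof -
  have "cnj (qform k A y) = (\<Sum>i<k. \<Sum>j<k. y i * cnj (A i j) * cnj (y j))"
    unfolding qform_def by (simp add: mult.assoc)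
  also have "\<dots> = (\<Sum>j<k. \<Sum>i<k. y i * cnj (A i j) * cnj (y j))" by (rule sum.swap)
  also have "\<dots> = qform k (\<lambda>i j. cnj (A j i)) y" unfolding qform_def by (simp add: mult_ac)
  finally show ?thesis .
qed

lemma hermitian_qform_real:
  assumes "hermitian_fun k A"
  shows "qform k A y = complex_of_real (Re (qform k A y))"
proof -
  have "cnj (qform k A y) = qform k A y"
    using assms unfolding cnj_qform hermitian_fun_cnj by (intro qform_cong) simp_all
  then show ?thesis by (simp add: complex_eq_iff)
qed

lemma strictly_accretive_matvec_nonzero:
  assumes "strictly_accretive k A" and "nonzero_vec k y"
  shows "\<exists>i<k. matvec k A y i \<noteq> 0"
proof (rule ccontr)
  assume "\<not> ?thesis"
  then have "qform k A y = 0" unfolding qform_eq_sum_matvec by simp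
  with assms show False unfolding strictly_accretive_def by fastforce
qed

lemma mult_mat_vec_eq_matvec:
  assumes "M \<in> carrier_mat k k" "v \<in> carrier_vec k" "i < k"
  shows "(M *\<^sub>v v) $ i = matvec k (entries M) (\<lambda>j. v $ j) i"
  using assms by (simp add: matvec_def entries_def scalar_prod_def atLeast0LessThan mult.commute)

lemma nonzero_vec_iff: "v \<in> carrier_vec k \<Longrightarrow> nonzero_vec k (\<lambda>j. v $ j) \<longleftrightarrow> v \<noteq> 0\<^sub>v k"
  unfolding nonzero_vec_def by (auto simp: vec_eq_iff)

lemma pencil_vec_iff_matvec:
  assumes "M \<in> carrier_mat k k" "N \<in> carrier_mat k k" "v \<in> carrier_vec k"
  shows "N *\<^sub>v v = l \<cdot>\<^sub>v (M *\<^sub>v v) \<longleftrightarrow>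
    (\<forall>i<k. matvec k (entries N) (\<lambda>j. v $ j) i = l * matvec k (entries M) (\<lambda>j. v $ j) i)"
  using assms by (auto simp: vec_eq_iff mult_mat_vec_eq_matvec[symmetric])

lemma eigenvalue_iff_matvec:
  assumes M: "M \<in> carrier_mat k k"
  shows "eigenvalue M e \<longleftrightarrow> (\<exists>y. nonzero_vec k y \<and> (\<forall>i<k. matvec k (entries M) y i = e * y i))"
proof
  assume "eigenvalue M e"
  then obtain v where "v \<in> carrier_vec k" "v \<noteq> 0\<^sub>v k" "M *\<^sub>v v = e \<cdot>\<^sub>v v"
    using M unfolding eigenvalue_def eigenvector_def by auto
  then show "\<exists>y. nonzero_vec k y \<and> (\<forall>i<k. matvec k (entries M) y i = e * y i)"
    using M by (intro exI[of _ "\<lambda>j. v $ j"]) (auto simp: nonzero_vec_iff mult_mat_vec_eq_matvec[symmetric])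
next
  assume "\<exists>y. nonzero_vec k y \<and> (\<forall>i<k. matvec k (entries M) y i = e * y i)"
  then obtain y where y: "nonzero_vec k y" "\<forall>i<k. matvec k (entries M) y i = e * y i" by blast
  have "M *\<^sub>v vec k y = e \<cdot>\<^sub>v vec k y"
  proof (rule eq_vecI)
    fix i assume "i < dim_vec (e \<cdot>\<^sub>v vec k y)"
    then have i: "i < k" by simp
    have "(M *\<^sub>v vec k y) $ i = matvec k (entries M) (\<lambda>j. vec k y $ j) i"
      using mult_mat_vec_eq_matvec[OF M _ i] by simp
    also have "\<dots> = matvec k (entries M) y i" by (intro matvec_cong) auto
    finally have "(M *\<^sub>v vec k y) $ i = matvec k (entries M) y i" .
    with y(2) i show "(M *\<^sub>v vec k y) $ i = (e \<cdot>\<^sub>v vec k y) $ i" by simp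
  qed (use M in simp)
  moreover have "vec k y \<noteq> 0\<^sub>v k" using y(1) unfolding nonzero_vec_def by (auto simp: vec_eq_iff)
  ultimately show "eigenvalue M e"
    using M unfolding eigenvalue_def eigenvector_def by (intro exI[of _ "vec k y"]) auto
qed

lemma det_nonzero_if_strictly_accretive:
  assumes M: "M \<in> carrier_mat k k" and acc: "strictly_accretive k (entries M)"
  shows "det M \<noteq> 0"
proof
  assume "det M = 0"
  then obtain v where v: "v \<in> carrier_vec k" "v \<noteq> 0\<^sub>v k" "M *\<^sub>v v = 0\<^sub>v k"
    using det_0_iff_vec_prod_zero[OF M] by auto
  then have "\<forall>i<k. matvec k (entries M) (\<lambda>j. v $ j) i = 0"
    using M by (metis index_zero_vec(1) mult_mat_vec_eq_matvec)
  moreover have "nonzero_vec k (\<lambda>j. v $ j)" using v by (simp add: nonzero_vec_iff)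
  ultimately show False using strictly_accretive_matvec_nonzero[OF acc] by blast
qed

lemma inv_mat_inverse:
  fixes A :: "'a::field mat"
  assumes A: "A \<in> carrier_mat n n" and "det A \<noteq> 0"
  shows "inv_mat A \<in> carrier_mat n n" "A * inv_mat A = 1\<^sub>m n" "inv_mat A * A = 1\<^sub>m n"
proof -
  have "\<exists>X. X \<in> carrier_mat n n \<and> A * X = 1\<^sub>m n \<and> X * A = 1\<^sub>m n"
    using det_non_zero_imp_unit[OF assms, of "()"] unfolding Units_def ring_mat_def by auto
  from someI_ex[OF this] A show "inv_mat A \<in> carrier_mat n n" "A * inv_mat A = 1\<^sub>m n" "inv_mat A * A = 1\<^sub>m n"
    unfolding inv_mat_def by auto
qed

lemma eigenvalue_inverse_mult:
  fixes M N Mi :: "'a::field mat"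
  assumes M: "M \<in> carrier_mat k k" and N: "N \<in> carrier_mat k k" and Mi: "Mi \<in> carrier_mat k k"
    and inv: "Mi * M = 1\<^sub>m k" and v: "v \<in> carrier_vec k" "v \<noteq> 0\<^sub>v k"
    and pencil: "N *\<^sub>v v = l \<cdot>\<^sub>v (M *\<^sub>v v)"
  shows "eigenvalue (Mi * N) l"
proof -
  have "(Mi * N) *\<^sub>v v = Mi *\<^sub>v (l \<cdot>\<^sub>v (M *\<^sub>v v))"
    using Mi N v pencil by (simp add: assoc_mult_mat_vec)
  also have "\<dots> = l \<cdot>\<^sub>v ((Mi * M) *\<^sub>v v)"
    using M Mi v by (simp add: mult_mat_vec assoc_mult_mat_vec)
  finally have "(Mi * N) *\<^sub>v v = l \<cdot>\<^sub>v v" using inv v by simp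
  with Mi N v show ?thesis unfolding eigenvalue_def eigenvector_def by auto
qed

lemma pencil_eigenvector_exists:
  fixes M N :: "complex mat"
  assumes M: "M \<in> carrier_mat k k" and N: "N \<in> carrier_mat k k" and "det M \<noteq> 0" and "0 < k"
  shows "\<exists>l v. v \<in> carrier_vec k \<and> v \<noteq> 0\<^sub>v k \<and> N *\<^sub>v v = l \<cdot>\<^sub>v (M *\<^sub>v v)"
proof -
  note Mi = inv_mat_inverse[OF M \<open>det M \<noteq> 0\<close>]
  have MiN: "inv_mat M * N \<in> carrier_mat k k" using Mi(1) N by simp
  obtain l v where v: "v \<in> carrier_vec k" "v \<noteq> 0\<^sub>v k" "(inv_mat M * N) *\<^sub>v v = l \<cdot>\<^sub>v v"
    using spectrum_non_empty[OF MiN \<open>0 < k\<close>] MiN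
    unfolding spectrum_def eigenvalue_def eigenvector_def by auto
  have "N *\<^sub>v v = (M * (inv_mat M * N)) *\<^sub>v v"
    using M N Mi by (simp add: assoc_mult_mat[symmetric])
  also have "\<dots> = l \<cdot>\<^sub>v (M *\<^sub>v v)"
    using M MiN v by (simp add: assoc_mult_mat_vec mult_mat_vec)
  finally show ?thesis using v by blast
qed

lemma pencil_eigenpair_exists:
  assumes "0 < k" and acc: "strictly_accretive k A"
  shows "\<exists>l x. nonzero_vec k x \<and> (\<forall>i<k. matvec k B x i = l * matvec k A x i)"
proof -
  define M where "M = mat k k (\<lambda>(i, j). A i j)"
  define N where "N = mat k k (\<lambda>(i, j). B i j)"
  have carrier: "M \<in> carrier_mat k k" "N \<in> carrier_mat k k" unfolding M_def N_def by auto
  have entries: "matvec k (entries M) y i = matvec k A y i" "matvec k (entries N) y i = matvec k B y i"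
    if "i < k" for y i
    using that unfolding M_def N_def entries_def by (auto intro: matvec_cong)
  have "strictly_accretive k (entries M)"
    using acc unfolding strictly_accretive_def qform_eq_sum_matvec by (simp add: entries)
  then have "det M \<noteq> 0" by (rule det_nonzero_if_strictly_accretive[OF carrier(1)])
  with pencil_eigenvector_exists[OF carrier] \<open>0 < k\<close> obtain l v
    where "v \<in> carrier_vec k" "v \<noteq> 0\<^sub>v k" "N *\<^sub>v v = l \<cdot>\<^sub>v (M *\<^sub>v v)" by blast
  with carrier show ?thesis
    by (intro exI[of _ l] exI[of _ "\<lambda>j. v $ j"]) (simp add: nonzero_vec_iff pencil_vec_iff_matvec entries)
qed

section \<open>Principal minors and congruences\<close>

definition skip_index :: "nat \<Rightarrow> nat \<Rightarrow> nat" where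
  "skip_index p i = (if i < p then i else Suc i)"

definition insert_entry :: "nat \<Rightarrow> (nat \<Rightarrow> complex) \<Rightarrow> complex \<Rightarrow> nat \<Rightarrow> complex" where
  "insert_entry p z t i = (if i = p then t else if i < p then z i else z (i - 1))"

definition minor :: "nat \<Rightarrow> (nat \<Rightarrow> nat \<Rightarrow> complex) \<Rightarrow> nat \<Rightarrow> nat \<Rightarrow> complex" where
  "minor p A i j = A (skip_index p i) (skip_index p j)"

lemma skip_index_neq [simp]: "skip_index p i \<noteq> p"
  unfolding skip_index_def by auto

lemma skip_index_less [simp]: "i < m \<Longrightarrow> skip_index p i < Suc m"
  unfolding skip_index_def by auto

lemma inj_skip_index: "inj (skip_index p)"
  unfolding inj_def skip_index_def by auto

lemma skip_index_cases:
  assumes "i < Suc m" "i \<noteq> p" "p < Suc m"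
  obtains i' where "i' < m" "i = skip_index p i'"
proof (cases "i < p")
  case True
  with assms show ?thesis by (intro that[of i]) (auto simp: skip_index_def)
next
  case False
  with assms show ?thesis by (intro that[of "i - 1"]) (auto simp: skip_index_def)
qed

lemma insert_entry_skip_index [simp]: "insert_entry p z t (skip_index p i) = z i"
  unfolding insert_entry_def skip_index_def by auto

lemma insert_entry_same [simp]: "insert_entry p z t p = t"
  unfolding insert_entry_def by auto

lemma sum_lessThan_Suc_skip_index:
  assumes p: "p < Suc m"
  shows "(\<Sum>i<Suc m. f i) = f p + (\<Sum>i<m. f (skip_index p i))"
proof -
  have "{..<Suc m} = insert p (skip_index p ` {..<m})"
    using p by (auto elim: skip_index_cases)
  moreover have "p \<notin> skip_index p ` {..<m}" by (metis imageE skip_index_neq)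
  moreover have "sum f (skip_index p ` {..<m}) = (\<Sum>i<m. f (skip_index p i))"
    using sum.reindex[OF inj_on_subset[OF inj_skip_index subset_UNIV]] by simp
  ultimately show ?thesis by simp
qed

lemma matvec_split_index:
  "p < Suc m \<Longrightarrow> matvec (Suc m) A u i = A i p * u p + (\<Sum>j<m. A i (skip_index p j) * u (skip_index p j))"
  unfolding matvec_def by (rule sum_lessThan_Suc_skip_index)

lemma qform_split_index:
  assumes "p < Suc m"
  shows "qform (Suc m) A u = cnj (u p) * A p p * u p
    + (\<Sum>j<m. cnj (u p) * A p (skip_index p j) * u (skip_index p j))
    + (\<Sum>i<m. cnj (u (skip_index p i)) * A (skip_index p i) p * u p)
    + qform m (minor p A) (\<lambda>i. u (skip_index p i))"
  unfolding qform_def minor_def sum_lessThan_Suc_skip_index[OF assms] sum.distrib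
  by (simp add: add_ac)

lemma qform_isolated_index:
  assumes "p < Suc m" and "\<And>i. i < Suc m \<Longrightarrow> i \<noteq> p \<Longrightarrow> A i p = 0 \<and> A p i = 0"
  shows "qform (Suc m) A u = cnj (u p) * A p p * u p + qform m (minor p A) (\<lambda>i. u (skip_index p i))"
  unfolding qform_split_index[OF assms(1)] using assms(2) by simp

lemma nonzero_vec_insert_entry:
  "nonzero_vec m z \<Longrightarrow> nonzero_vec (Suc m) (insert_entry p z t)"
  unfolding nonzero_vec_def by (metis insert_entry_skip_index skip_index_less)

lemma strictly_accretive_minor:
  assumes "strictly_accretive (Suc m) A" and "p < Suc m"
  shows "strictly_accretive m (minor p A)"
  unfolding strictly_accretive_def
proof (intro allI impI)
  fix z assume "nonzero_vec m z"
  then have "0 < Re (qform (Suc m) A (insert_entry p z 0))"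
    using assms(1) nonzero_vec_insert_entry unfolding strictly_accretive_def by blast
  then show "0 < Re (qform m (minor p A) z)"
    unfolding qform_split_index[OF assms(2)] by simp
qed

lemma hermitian_minor: "hermitian_fun (Suc m) A \<Longrightarrow> hermitian_fun m (minor p A)"
  unfolding hermitian_fun_def minor_def
  by (metis Suc_lessD Suc_mono less_Suc_eq skip_index_def)

definition congruence :: "nat \<Rightarrow> (nat \<Rightarrow> nat \<Rightarrow> complex) \<Rightarrow> (nat \<Rightarrow> nat \<Rightarrow> complex) \<Rightarrow> nat \<Rightarrow> nat \<Rightarrow> complex" where
  "congruence k Q A i j = (\<Sum>a<k. \<Sum>b<k. cnj (Q a i) * A a b * Q b j)"

definition adjoint_matvec :: "nat \<Rightarrow> (nat \<Rightarrow> nat \<Rightarrow> complex) \<Rightarrow> (nat \<Rightarrow> complex) \<Rightarrow> nat \<Rightarrow> complex" where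
  "adjoint_matvec k Q z i = (\<Sum>a<k. cnj (Q a i) * z a)"

lemma matvec_congruence:
  "matvec k (congruence k Q A) u i = adjoint_matvec k Q (matvec k A (matvec k Q u)) i"
proof -
  have "matvec k (congruence k Q A) u i = (\<Sum>j<k. \<Sum>a<k. \<Sum>b<k. cnj (Q a i) * A a b * Q b j * u j)"
    by (simp add: matvec_def congruence_def sum_distrib_right)
  also have "\<dots> = (\<Sum>a<k. \<Sum>b<k. \<Sum>j<k. cnj (Q a i) * A a b * Q b j * u j)"
    by (subst sum.swap) (rule sum.cong[OF refl], rule sum.swap)
  also have "\<dots> = adjoint_matvec k Q (matvec k A (matvec k Q u)) i"
    by (simp add: adjoint_matvec_def matvec_def sum_distrib_left mult_ac)
  finally show ?thesis .
qed

lemma qform_congruence: "qform k (congruence k Q A) u = qform k A (matvec k Q u)"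
proof -
  have "qform k (congruence k Q A) u
      = (\<Sum>i<k. \<Sum>a<k. cnj (u i) * cnj (Q a i) * matvec k A (matvec k Q u) a)"
    unfolding qform_eq_sum_matvec matvec_congruence adjoint_matvec_def
    by (simp add: sum_distrib_left mult_ac)
  also have "\<dots> = (\<Sum>a<k. \<Sum>i<k. cnj (u i) * cnj (Q a i) * matvec k A (matvec k Q u) a)"
    by (rule sum.swap)
  also have "\<dots> = qform k A (matvec k Q u)"
    unfolding qform_eq_sum_matvec by (simp add: matvec_def sum_distrib_right mult_ac)
  finally show ?thesis .
qed

lemma hermitian_congruence:
  assumes "hermitian_fun k A"
  shows "hermitian_fun k (congruence k Q A)"
  unfolding hermitian_fun_def
proof (intro allI impI)
  fix i j assume "i < k" "j < k"
  have "cnj (congruence k Q A j i) = (\<Sum>a<k. \<Sum>b<k. Q a j * A b a * cnj (Q b i))"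
    using assms unfolding congruence_def hermitian_fun_cnj by (simp add: mult_ac)
  also have "\<dots> = (\<Sum>b<k. \<Sum>a<k. Q a j * A b a * cnj (Q b i))" by (rule sum.swap)
  also have "\<dots> = congruence k Q A i j" unfolding congruence_def by (simp add: mult_ac)
  finally show "congruence k Q A i j = cnj (congruence k Q A j i)" by simp
qed

lemma pencil_eigenvector_congruence:
  assumes adjoint_inj: "\<And>z. \<forall>j<k. adjoint_matvec k Q z j = 0 \<Longrightarrow> \<forall>a<k. z a = 0"
    and eig: "\<forall>i<k. matvec k (congruence k Q B) u i = \<mu> * matvec k (congruence k Q A) u i"
  shows "\<forall>i<k. matvec k B (matvec k Q u) i = \<mu> * matvec k A (matvec k Q u) i"
proof -
  let ?y = "matvec k Q u"
  have "adjoint_matvec k Q (\<lambda>a. matvec k B ?y a - \<mu> * matvec k A ?y a) j = 0" if "j < k" for j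
  proof -
    have "adjoint_matvec k Q (\<lambda>a. matvec k B ?y a - \<mu> * matvec k A ?y a) j
        = matvec k (congruence k Q B) u j - \<mu> * matvec k (congruence k Q A) u j"
      unfolding matvec_congruence adjoint_matvec_def
      by (simp add: algebra_simps sum_subtractf sum_distrib_left)
    with eig that show ?thesis by simp
  qed
  then show ?thesis using adjoint_inj by fastforce
qed

lemma strictly_accretive_congruence:
  assumes "strictly_accretive k A" and "\<And>u. nonzero_vec k u \<Longrightarrow> nonzero_vec k (matvec k Q u)"
  shows "strictly_accretive k (congruence k Q A)"
  using assms unfolding strictly_accretive_def qform_congruence by blast

text \<open>Column \<open>p\<close> of the deflating congruence is the pencil eigenvector \<open>x\<close>, so it is
  invertible once \<open>x p \<noteq> 0\<close>; the coefficients \<open>c\<close> are then chosen to clear row and column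
  \<open>p\<close> of the transformed pencil.\<close>

definition deflation :: "nat \<Rightarrow> (nat \<Rightarrow> complex) \<Rightarrow> (nat \<Rightarrow> complex) \<Rightarrow> nat \<Rightarrow> nat \<Rightarrow> complex" where
  "deflation p x c i j = (if j = p then x i else id_fun i j - c j * x i)"

lemma matvec_deflation:
  assumes "i < k" and "p < k"
  shows "matvec k (deflation p x c) u i
    = x i * (u p - (\<Sum>j<k. if j = p then 0 else c j * u j)) + (if i = p then 0 else u i)"
proof -
  have "matvec k (deflation p x c) u i = (\<Sum>j<k. x i * ((if j = p then u j else 0)
      - (if j = p then 0 else c j * u j)) + (if j = i then (if i = p then 0 else u i) else 0))"
    unfolding matvec_def deflation_def id_fun_def by (intro sum.cong refl) (auto simp: algebra_simps)
  also have "\<dots> = x i * ((\<Sum>j<k. if j = p then u j else 0) - (\<Sum>j<k. if j = p then 0 else c j * u j))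
      + (\<Sum>j<k. if j = i then (if i = p then 0 else u i) else 0)"
    unfolding sum.distrib sum_distrib_left[symmetric] sum_subtractf ..
  also have "\<dots> = x i * (u p - (\<Sum>j<k. if j = p then 0 else c j * u j)) + (if i = p then 0 else u i)"
    using assms by simp
  finally show ?thesis .
qed

lemma nonzero_vec_deflation:
  assumes p: "p < k" and xp: "x p \<noteq> 0" and u: "nonzero_vec k u"
  shows "nonzero_vec k (matvec k (deflation p x c) u)"
proof (rule ccontr)
  define s where "s = u p - (\<Sum>j<k. if j = p then 0 else c j * u j)"
  assume "\<not> ?thesis"
  then have zero: "\<And>i. i < k \<Longrightarrow> matvec k (deflation p x c) u i = 0"
    unfolding nonzero_vec_def by auto
  have "x p * s = 0" using zero[OF p] matvec_deflation[OF p p, of x c u] unfolding s_def by simp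
  with xp have "s = 0" by simp
  then have u_off: "\<And>i. i < k \<Longrightarrow> i \<noteq> p \<Longrightarrow> u i = 0"
    using zero matvec_deflation[OF _ p, of _ x c u] unfolding s_def by fastforce
  then have "(\<Sum>j<k. if j = p then 0 else c j * u j) = 0" by (intro sum.neutral) auto
  with \<open>s = 0\<close> have "u p = 0" unfolding s_def by simp
  with u_off u show False unfolding nonzero_vec_def by metis
qed

lemma deflation_surj:
  assumes p: "p < k" and xp: "x p \<noteq> 0"
  obtains u where "\<And>i. i < k \<Longrightarrow> matvec k (deflation p x c) u i = v i"
proof -
  define s where "s = v p / x p"
  define u where "u j = (if j = p then s + (\<Sum>j'<k. if j' = p then 0 else c j' * (v j' - s * x j'))
     else v j - s * x j)" for j
  have "(\<Sum>j<k. if j = p then 0 else c j * u j) = (\<Sum>j'<k. if j' = p then 0 else c j' * (v j' - s * x j'))"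
    by (intro sum.cong refl) (auto simp: u_def)
  then have "u p - (\<Sum>j<k. if j = p then 0 else c j * u j) = s" by (simp add: u_def)
  with xp show ?thesis
    by (intro that[of u]) (auto simp: matvec_deflation[OF _ p] u_def s_def)
qed

lemma adjoint_matvec_deflation:
  assumes "j < k" and "p < k"
  shows "adjoint_matvec k (deflation p x c) z j = (if j = p then (\<Sum>a<k. cnj (x a) * z a)
     else z j - cnj (c j) * (\<Sum>a<k. cnj (x a) * z a))"
proof (cases "j = p")
  case False
  have "adjoint_matvec k (deflation p x c) z j
      = (\<Sum>a<k. (if a = j then z a else 0) - cnj (c j) * (cnj (x a) * z a))"
    unfolding adjoint_matvec_def deflation_def id_fun_def using False
    by (intro sum.cong refl) (auto simp: algebra_simps)
  with False \<open>j < k\<close> show ?thesis by (simp add: sum_subtractf sum_distrib_left)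
qed (simp add: adjoint_matvec_def deflation_def)

lemma adjoint_matvec_deflation_inj:
  assumes p: "p < k" and xp: "x p \<noteq> 0" and zero: "\<forall>j<k. adjoint_matvec k (deflation p x c) z j = 0"
  shows "\<forall>a<k. z a = 0"
proof -
  define s where "s = (\<Sum>a<k. cnj (x a) * z a)"
  have "s = 0" using zero p adjoint_matvec_deflation[OF p p, of x c z] unfolding s_def by simp
  then have z_off: "\<And>j. j < k \<Longrightarrow> j \<noteq> p \<Longrightarrow> z j = 0"
    using zero adjoint_matvec_deflation[OF _ p, of _ x c z] unfolding s_def by fastforce
  then have "s = cnj (x p) * z p"
    unfolding s_def using p by (subst sum.remove[of _ p]) auto
  with \<open>s = 0\<close> xp z_off show ?thesis by (metis mult_eq_0_iff complex_cnj_zero_iff)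
qed

lemma congruence_deflation_col:
  "congruence k (deflation p x c) X i p = adjoint_matvec k (deflation p x c) (matvec k X x) i"
  unfolding congruence_def adjoint_matvec_def matvec_def sum_distrib_left
  by (intro sum.cong refl) (simp add: deflation_def mult_ac)

lemma congruence_deflation_diag:
  assumes "p < k"
  shows "congruence k (deflation p x c) X p p = qform k X x"
  using adjoint_matvec_deflation[OF assms assms, of x c "matvec k X x"]
  by (simp add: congruence_deflation_col qform_eq_sum_matvec)

lemma congruence_deflation_col_eq_zero:
  assumes "i < k" "p < k" "i \<noteq> p" and a: "qform k A x \<noteq> 0"
    and X: "\<And>j. j < k \<Longrightarrow> matvec k X x j = l * matvec k A x j"
  shows "congruence k (deflation p x (\<lambda>j. cnj (matvec k A x j / qform k A x))) X i p = 0"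
proof -
  have "(\<Sum>a<k. cnj (x a) * matvec k X x a) = l * qform k A x"
    unfolding qform_eq_sum_matvec sum_distrib_left by (intro sum.cong refl) (simp add: X)
  with assms show ?thesis
    by (simp add: congruence_deflation_col adjoint_matvec_deflation X)
qed

lemma deflation_isolates_index:
  assumes p: "p < k" and a: "qform k A x \<noteq> 0" and herm: "hermitian_fun k B"
    and eig: "\<forall>i<k. matvec k B x i = l * matvec k A x i"
    and Q: "Q = deflation p x (\<lambda>j. cnj (matvec k A x j / qform k A x))"
  shows "\<And>i. i < k \<Longrightarrow> i \<noteq> p \<Longrightarrow> congruence k Q A i p = 0"
    and "\<And>i. i < k \<Longrightarrow> i \<noteq> p \<Longrightarrow> congruence k Q B i p = 0 \<and> congruence k Q B p i = 0"
    and "congruence k Q A p p = qform k A x"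
    and "congruence k Q B p p = l * qform k A x"
proof -
  show "congruence k Q A i p = 0" if "i < k" "i \<noteq> p" for i
    using congruence_deflation_col_eq_zero[OF that(1) p that(2) a, of A 1] unfolding Q by simp
  show "congruence k Q A p p = qform k A x"
    unfolding Q by (rule congruence_deflation_diag[OF p])
  have "qform k B x = l * qform k A x"
    unfolding qform_eq_sum_matvec sum_distrib_left using eig by (intro sum.cong) (simp_all add: mult_ac)
  then show "congruence k Q B p p = l * qform k A x"
    unfolding Q by (simp add: congruence_deflation_diag[OF p])
  show "congruence k Q B i p = 0 \<and> congruence k Q B p i = 0" if "i < k" "i \<noteq> p" for i
  proof -
    have "congruence k Q B i p = 0"
      using congruence_deflation_col_eq_zero[OF that(1) p that(2) a, of B l] eig unfolding Q by simp
    moreover have "congruence k Q B p i = cnj (congruence k Q B i p)"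
      using hermitian_congruence[OF herm, of Q] that p unfolding hermitian_fun_def by blast
    ultimately show ?thesis by simp
  qed
qed

section \<open>A Hermitian pencil with a positive direction\<close>

lemma Re_nonpos_if_real_product:
  fixes l a :: complex
  assumes "Im (l * a) = 0" and "Re l \<le> 0" and "0 < Re a"
  shows "Re (l * a) \<le> 0"
proof -
  obtain x y u w where l: "l = Complex x y" and a: "a = Complex u w" by (meson complex.exhaust)
  have im: "x * w + y * u = 0" using assms(1) by (simp add: l a)
  have "(x * u - y * w) * u = x * (u * u + w * w) - w * (x * w + y * u)"
    by (simp add: algebra_simps)
  also have "\<dots> \<le> 0" using assms(2) im by (simp add: l mult_nonpos_nonneg)
  finally show ?thesis using assms(3) by (simp add: l a mult_le_0_iff)
qed

lemma qform_minor_pos: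
  assumes "p < Suc m" and iso: "\<And>i. i < Suc m \<Longrightarrow> i \<noteq> p \<Longrightarrow> A i p = 0 \<and> A p i = 0"
    and "Im (A p p) = 0" "Re (A p p) \<le> 0" and "0 < Re (qform (Suc m) A u)"
  shows "0 < Re (qform m (minor p A) (\<lambda>i. u (skip_index p i)))"
proof -
  define r where "r = cnj (u p) * A p p * u p"
  have "r = A p p * (u p * cnj (u p))" unfolding r_def by (simp add: mult_ac)
  also have "\<dots> = complex_of_real (Re (A p p) * (cmod (u p))\<^sup>2)"
    using assms(3) by (simp add: complex_norm_square[symmetric] complex_eq_iff)
  finally have "Re r \<le> 0" using assms(4) by (simp add: mult_nonpos_nonneg)
  moreover have "qform (Suc m) A u = r + qform m (minor p A) (\<lambda>i. u (skip_index p i))"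
    unfolding r_def using assms(1) iso by (rule qform_isolated_index)
  ultimately show ?thesis using assms(5) by simp
qed

lemma pencil_eigenvector_lift:
  assumes p: "p < Suc m"
    and isoA: "\<And>i. i < Suc m \<Longrightarrow> i \<noteq> p \<Longrightarrow> A i p = 0"
    and isoB: "\<And>i. i < Suc m \<Longrightarrow> i \<noteq> p \<Longrightarrow> B i p = 0 \<and> B p i = 0"
    and z: "nonzero_vec m z"
    and eig: "\<forall>i<m. matvec m (minor p B) z i = \<mu> * matvec m (minor p A) z i"
    and gap: "B p p \<noteq> \<mu> * A p p"
  shows "\<exists>u. nonzero_vec (Suc m) u \<and> (\<forall>i<Suc m. matvec (Suc m) B u i = \<mu> * matvec (Suc m) A u i)"
proof (intro exI conjI allI impI)
  define g where "g = (\<Sum>j<m. A p (skip_index p j) * z j)"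
  define u where "u = insert_entry p z (\<mu> * g / (B p p - \<mu> * A p p))"
  show "nonzero_vec (Suc m) u" unfolding u_def by (rule nonzero_vec_insert_entry[OF z])
  fix i assume i: "i < Suc m"
  show "matvec (Suc m) B u i = \<mu> * matvec (Suc m) A u i"
  proof (cases "i = p")
    case True
    have "matvec (Suc m) B u p = B p p * u p" and "matvec (Suc m) A u p = A p p * u p + g"
      using isoB by (simp_all add: matvec_split_index[OF p] u_def g_def)
    moreover have "B p p * u p = \<mu> * (A p p * u p + g)"
      using gap by (simp add: u_def field_simps)
    ultimately show ?thesis using True by simp
  next
    case False
    then obtain i' where "i' < m" "i = skip_index p i'" using i p by (auto elim: skip_index_cases)
    moreover have "matvec (Suc m) B u i = matvec m (minor p B) z i'"
      and "matvec (Suc m) A u i = matvec m (minor p A) z i'"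
      using isoA[OF i False] isoB[OF i False] \<open>i = skip_index p i'\<close>
      unfolding matvec_split_index[OF p] by (simp_all add: matvec_def minor_def u_def)
    ultimately show ?thesis using eig by simp
  qed
qed

text \<open>If the eigenvalue \<open>l\<close> found first has \<open>Re l \<le> 0\<close>, then \<open>x\<^sup>*Bx = l x\<^sup>*Ax\<close> is real and
  nonpositive, so after splitting off \<open>x\<close> the positive direction of \<open>B\<close> survives in the
  minor, where induction applies.\<close>

lemma pencil_deflation_step:
  assumes IH: "\<And>A' B' v'. hermitian_fun m B' \<Longrightarrow> strictly_accretive m A' \<Longrightarrow>
      0 < Re (qform m B' v') \<Longrightarrow>
      \<exists>\<mu> y. 0 < Re \<mu> \<and> nonzero_vec m y \<and> (\<forall>i<m. matvec m B' y i = \<mu> * matvec m A' y i)"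
    and herm: "hermitian_fun (Suc m) B" and acc: "strictly_accretive (Suc m) A"
    and pos: "0 < Re (qform (Suc m) B v)"
    and x: "nonzero_vec (Suc m) x" and eig: "\<forall>i<Suc m. matvec (Suc m) B x i = l * matvec (Suc m) A x i"
    and "Re l \<le> 0"
  shows "\<exists>\<mu> y. 0 < Re \<mu> \<and> nonzero_vec (Suc m) y
    \<and> (\<forall>i<Suc m. matvec (Suc m) B y i = \<mu> * matvec (Suc m) A y i)"
proof -
  define a where "a = qform (Suc m) A x"
  have Re_a: "0 < Re a" using acc x unfolding a_def strictly_accretive_def by blast
  obtain p where p: "p < Suc m" and xp: "x p \<noteq> 0" using x unfolding nonzero_vec_def by blast
  define Q where "Q = deflation p x (\<lambda>j. cnj (matvec (Suc m) A x j / a))"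
  define A' where "A' = congruence (Suc m) Q A"
  define B' where "B' = congruence (Suc m) Q B"
  from Re_a have "qform (Suc m) A x \<noteq> 0" unfolding a_def by auto
  note iso = deflation_isolates_index[OF p this herm eig Q_def[unfolded a_def],
      folded A'_def B'_def a_def]
  have "B' p p = cnj (B' p p)"
    using hermitian_congruence[OF herm, of Q] p unfolding B'_def hermitian_fun_def by blast
  from arg_cong[OF this, of Im] have "Im (B' p p) = 0" by simp
  with iso(4) have Im_la: "Im (l * a) = 0" by simp
  have herm': "hermitian_fun m (minor p B')"
    unfolding B'_def by (rule hermitian_minor[OF hermitian_congruence[OF herm]])
  have acc': "strictly_accretive m (minor p A')"
    using strictly_accretive_congruence[OF acc] nonzero_vec_deflation[where x = x, OF p xp]
    unfolding A'_def Q_def by (blast intro: strictly_accretive_minor[OF _ p])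
  obtain u where "\<And>i. i < Suc m \<Longrightarrow> matvec (Suc m) Q u i = v i"
    using deflation_surj[where x = x, OF p xp] unfolding Q_def by blast
  then have "qform (Suc m) B' u = qform (Suc m) B v"
    unfolding B'_def qform_congruence by (intro qform_cong) simp_all
  then have "0 < Re (qform m (minor p B') (\<lambda>i. u (skip_index p i)))"
    using qform_minor_pos[where A = B', OF p iso(2)] pos iso(4) Im_la
      Re_nonpos_if_real_product[OF Im_la \<open>Re l \<le> 0\<close> Re_a] by simp
  from IH[OF herm' acc' this] obtain \<mu> z where \<mu>: "0 < Re \<mu>" and z: "nonzero_vec m z"
    and eig': "\<forall>i<m. matvec m (minor p B') z i = \<mu> * matvec m (minor p A') z i" by blast
  have "B' p p \<noteq> \<mu> * A' p p" using iso(3,4) \<mu> \<open>Re l \<le> 0\<close> Re_a by auto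
  from pencil_eigenvector_lift[where A = A' and B = B', OF p iso(1) iso(2) z eig' this] obtain w
    where w: "nonzero_vec (Suc m) w"
      and eig_w: "\<forall>i<Suc m. matvec (Suc m) B' w i = \<mu> * matvec (Suc m) A' w i" by blast
  show ?thesis
    using \<mu> nonzero_vec_deflation[where x = x, OF p xp w] adjoint_matvec_deflation_inj[where x = x, OF p xp]
      pencil_eigenvector_congruence[OF _ eig_w[unfolded A'_def B'_def]]
    unfolding Q_def by blast
qed

theorem hermitian_pencil_eigenvalue_Re_pos:
  assumes "hermitian_fun k B" and "strictly_accretive k A" and "0 < Re (qform k B v)"
  shows "\<exists>\<mu> y. 0 < Re \<mu> \<and> nonzero_vec k y \<and> (\<forall>i<k. matvec k B y i = \<mu> * matvec k A y i)"
  using assms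
proof (induction k arbitrary: A B v)
  case 0
  then show ?case by (simp add: qform_def)
next
  case (Suc m)
  obtain l x where x: "nonzero_vec (Suc m) x"
    and eig: "\<forall>i<Suc m. matvec (Suc m) B x i = l * matvec (Suc m) A x i"
    using pencil_eigenpair_exists[OF _ Suc.prems(2)] by blast
  show ?case
  proof (cases "0 < Re l")
    case True
    with x eig show ?thesis by blast
  next
    case False
    then show ?thesis using pencil_deflation_step[OF Suc.IH Suc.prems x eig] by simp
  qed
qed

section \<open>Bounds for Hermitian forms\<close>

lemma qform_eigenvector:
  assumes "\<forall>i<k. matvec k X z i = e * z i"
  shows "qform k X z = e * complex_of_real (sqnorm k z)"
proof -
  have "qform k X z = e * qform k id_fun z"
    unfolding qform_eq_sum_matvec sum_distrib_left using assms
    by (intro sum.cong) (simp_all add: matvec_id_fun mult_ac)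
  then show ?thesis by (simp add: qform_id_fun)
qed

lemma hermitian_eigenvalue_real:
  assumes "hermitian_fun k X" and "nonzero_vec k z" and "\<forall>i<k. matvec k X z i = e * z i"
  shows "Im e = 0"
proof -
  have "Im (e * complex_of_real (sqnorm k z)) = 0"
    using arg_cong[OF hermitian_qform_real[OF assms(1), of z], of Im] qform_eigenvector[OF assms(3)]
    by simp
  with sqnorm_pos[OF assms(2)] show ?thesis by simp
qed

text \<open>The pencil theorem with \<open>A = I\<close> replaces the spectral theorem: a value of the form of
  \<open>X - r I\<close> with positive real part yields an eigenvalue of \<open>X\<close> with real part above \<open>r\<close>.\<close>

lemma hermitian_qform_le:
  assumes herm: "hermitian_fun k X"
    and eig_bound: "\<And>e z. nonzero_vec k z \<Longrightarrow> \<forall>i<k. matvec k X z i = e * z i \<Longrightarrow> cmod e \<le> r"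
  shows "Re (qform k X y) \<le> r * sqnorm k y"
proof (rule ccontr)
  define X' where "X' i j = X i j - complex_of_real r * id_fun i j" for i j
  assume "\<not> ?thesis"
  then have "0 < Re (qform k X' y)"
    unfolding X'_def qform_diff qform_scale qform_id_fun by simp
  moreover have "hermitian_fun k X'"
    using herm unfolding hermitian_fun_cnj X'_def id_fun_def by simp
  ultimately obtain \<mu> z where "0 < Re \<mu>" and z: "nonzero_vec k z"
    and eig: "\<forall>i<k. matvec k X' z i = \<mu> * matvec k id_fun z i"
    using hermitian_pencil_eigenvalue_Re_pos strictly_accretive_id_fun by blast
  have "\<forall>i<k. matvec k X z i = (complex_of_real r + \<mu>) * z i"
    using eig unfolding X'_def matvec_diff matvec_scale by (simp add: matvec_id_fun algebra_simps)
  from eig_bound[OF z this] have "cmod (complex_of_real r + \<mu>) \<le> r" .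
  with complex_Re_le_cmod[of "complex_of_real r + \<mu>"] \<open>0 < Re \<mu>\<close> show False by simp
qed

lemma hermitian_abs_qform_le:
  assumes herm: "hermitian_fun k X"
    and eig_bound: "\<And>e z. nonzero_vec k z \<Longrightarrow> \<forall>i<k. matvec k X z i = e * z i \<Longrightarrow> cmod e \<le> r"
  shows "\<bar>Re (qform k X y)\<bar> \<le> r * sqnorm k y"
proof -
  have "Re (qform k (\<lambda>i j. - 1 * X i j) y) \<le> r * sqnorm k y"
  proof (rule hermitian_qform_le)
    show "hermitian_fun k (\<lambda>i j. - 1 * X i j)"
      using herm unfolding hermitian_fun_cnj by simp
    fix e z assume "nonzero_vec k z" "\<forall>i<k. matvec k (\<lambda>i j. - 1 * X i j) z i = e * z i"
    then have "nonzero_vec k z" "\<forall>i<k. matvec k X z i = (- e) * z i"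
      unfolding matvec_scale by (simp_all add: minus_equation_iff)
    from eig_bound[OF this] show "cmod e \<le> r" by simp
  qed
  moreover have "Re (qform k X y) \<le> r * sqnorm k y"
    using herm eig_bound by (rule hermitian_qform_le)
  ultimately show ?thesis unfolding qform_scale by simp
qed

lemma hermitian_of_real_symmetric:
  fixes B :: "real mat"
  assumes "B \<in> carrier_mat n n" and "transpose_mat B = B"
  shows "hermitian_fun n (entries (map_mat complex_of_real B))"
proof -
  have "B $$ (j, i) = B $$ (i, j)" if "i < n" "j < n" for i j
    using assms that by (metis carrier_matD index_transpose_mat(1))
  with assms(1) show ?thesis unfolding hermitian_fun_cnj entries_def by simp
qed

lemma eigenvalue_of_real_iff:
  fixes B :: "real mat"
  assumes "B \<in> carrier_mat n n"
  shows "eigenvalue (map_mat complex_of_real B) (complex_of_real x) \<longleftrightarrow> eigenvalue B x"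
  using assms by (simp add: eigenvalue_root_char_poly of_real_hom.char_poly_hom)

lemma abs_qform_le_rho:
  fixes B :: "real mat"
  assumes B: "B \<in> carrier_mat n n" and sym: "transpose_mat B = B"
  shows "\<bar>Re (qform n (entries (map_mat complex_of_real B)) y)\<bar> \<le> rho B * sqnorm n y"
proof (rule hermitian_abs_qform_le[OF hermitian_of_real_symmetric[OF assms]])
  fix e z
  assume "nonzero_vec n z" "\<forall>i<n. matvec n (entries (map_mat complex_of_real B)) z i = e * z i"
  moreover from this have "0 < n" unfolding nonzero_vec_def by auto
  ultimately have "eigenvalue (map_mat complex_of_real B) e"
    using eigenvalue_iff_matvec[of "map_mat complex_of_real B" n] B by auto
  then have "cmod e \<in> norm ` spectrum (map_mat complex_of_real B)"
    unfolding spectrum_def by auto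
  from spectral_radius_mem_max(2)[OF _ \<open>0 < n\<close> this] B
  show "cmod e \<le> rho B" unfolding rho_def by simp
qed

lemma qform_pos_if_lambda_max_pos:
  fixes B :: "real mat"
  assumes B: "B \<in> carrier_mat n n" and sym: "transpose_mat B = B" and "0 < n"
    and pos: "0 < lambda_max B"
  shows "\<exists>v. 0 < Re (qform n (entries (map_mat complex_of_real B)) v)"
proof -
  let ?Bc = "map_mat complex_of_real B"
  have Bc: "?Bc \<in> carrier_mat n n" using B by simp
  note herm = hermitian_of_real_symmetric[OF assms(1,2)]
  \<comment> \<open>\<open>lambda_max B\<close> is a \<open>Max\<close>, so it is an eigenvalue only once some real eigenvalue exists.\<close>
  obtain e where "eigenvalue ?Bc e" using spectrum_non_empty[OF Bc \<open>0 < n\<close>] unfolding spectrum_def by auto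
  moreover from this have "Im e = 0"
    using hermitian_eigenvalue_real[OF herm] by (auto simp: eigenvalue_iff_matvec[OF Bc])
  moreover have "e = complex_of_real (Re e)" using \<open>Im e = 0\<close> by (simp add: complex_eq_iff)
  ultimately have "eigenvalue B (Re e)" using eigenvalue_of_real_iff[OF B] by metis
  moreover have "finite {x. eigenvalue B x}"
    using card_finite_spectrum(1)[OF B] unfolding spectrum_def by simp
  ultimately have "eigenvalue B (lambda_max B)" unfolding lambda_max_def
    by (metis (mono_tags) Max_in empty_iff mem_Collect_eq)
  then obtain z where z: "nonzero_vec n z"
    and eig: "\<forall>i<n. matvec n (entries ?Bc) z i = complex_of_real (lambda_max B) * z i"
    using eigenvalue_of_real_iff[OF B] eigenvalue_iff_matvec[OF Bc] by blast
  have "Re (qform n (entries ?Bc) z) = lambda_max B * sqnorm n z"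
    unfolding qform_eigenvector[OF eig] by simp
  with pos sqnorm_pos[OF z] show ?thesis by (metis mult_pos_pos)
qed

section \<open>Block splitting of a Hermitian form\<close>

definition strict_upper_part :: "(nat \<Rightarrow> nat) \<Rightarrow> (nat \<Rightarrow> nat \<Rightarrow> complex) \<Rightarrow> nat \<Rightarrow> nat \<Rightarrow> complex" where
  "strict_upper_part bi X i j = (if bi i < bi j then X i j else 0)"

definition block_diag_part :: "(nat \<Rightarrow> nat) \<Rightarrow> (nat \<Rightarrow> nat \<Rightarrow> complex) \<Rightarrow> nat \<Rightarrow> nat \<Rightarrow> complex" where
  "block_diag_part bi X i j = (if bi i = bi j then X i j else 0)"

definition block_restrict :: "(nat \<Rightarrow> nat) \<Rightarrow> nat \<Rightarrow> (nat \<Rightarrow> complex) \<Rightarrow> nat \<Rightarrow> complex" where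
  "block_restrict bi s y i = (if bi i = s then y i else 0)"

lemma Re_qform_hermitian_split:
  assumes "hermitian_fun k X"
  shows "Re (qform k X y)
    = 2 * Re (qform k (strict_upper_part bi X) y) + Re (qform k (block_diag_part bi X) y)"
proof -
  have "qform k X y = qform k (\<lambda>i j. (strict_upper_part bi X i j + cnj (strict_upper_part bi X j i))
      + block_diag_part bi X i j) y"
    using assms unfolding hermitian_fun_cnj strict_upper_part_def block_diag_part_def
    by (intro qform_cong) auto
  then show ?thesis unfolding qform_add cnj_qform[symmetric] by simp
qed

lemma qform_block_diag_eq_sum:
  "qform k (block_diag_part bi X) y = (\<Sum>s\<in>bi ` {..<k}. qform k X (block_restrict bi s y))"
proof -
  have "(\<Sum>s\<in>bi ` {..<k}. qform k X (block_restrict bi s y))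
     = (\<Sum>s\<in>bi ` {..<k}. \<Sum>i<k. \<Sum>j<k.
         if s = bi i then (if bi j = bi i then cnj (y i) * X i j * y j else 0) else 0)"
    unfolding qform_def block_restrict_def by (intro sum.cong refl) auto
  also have "\<dots> = (\<Sum>i<k. \<Sum>j<k. \<Sum>s\<in>bi ` {..<k}.
         if s = bi i then (if bi j = bi i then cnj (y i) * X i j * y j else 0) else 0)"
    by (subst sum.swap) (rule sum.cong[OF refl], rule sum.swap)
  also have "\<dots> = qform k (block_diag_part bi X) y"
    unfolding qform_def block_diag_part_def by (intro sum.cong refl) (auto simp: sum.delta)
  finally show ?thesis ..
qed

lemma Re_qform_block_diag_le:
  assumes bound: "\<And>z. Re (qform k X z) \<le> r * sqnorm k z"
  shows "Re (qform k (block_diag_part bi X) y) \<le> r * sqnorm k y"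
proof -
  have "block_diag_part bi id_fun = id_fun"
    unfolding block_diag_part_def id_fun_def by (intro ext) simp
  then have sqnorm_sum: "sqnorm k y = (\<Sum>s\<in>bi ` {..<k}. sqnorm k (block_restrict bi s y))"
    using arg_cong[OF qform_block_diag_eq_sum[of k bi id_fun y], of Re]
    by (simp add: qform_id_fun Re_sum)
  have "Re (qform k (block_diag_part bi X) y) = (\<Sum>s\<in>bi ` {..<k}. Re (qform k X (block_restrict bi s y)))"
    unfolding qform_block_diag_eq_sum Re_sum ..
  also have "\<dots> \<le> (\<Sum>s\<in>bi ` {..<k}. r * sqnorm k (block_restrict bi s y))"
    by (intro sum_mono bound)
  finally show ?thesis unfolding sqnorm_sum sum_distrib_left .
qed

lemma Re_qform_shifted_upper:
  assumes "hermitian_fun k X"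
  shows "Re (qform k (\<lambda>i j. id_fun i j + complex_of_real \<beta> * strict_upper_part bi X i j) y)
    = sqnorm k y + \<beta> * (Re (qform k X y) - Re (qform k (block_diag_part bi X) y)) / 2"
  unfolding qform_add qform_scale qform_id_fun Re_qform_hermitian_split[OF assms, of y bi] by simp

lemma strictly_accretive_shifted_upper:
  assumes herm: "hermitian_fun k X" and bound: "\<And>z. \<bar>Re (qform k X z)\<bar> \<le> r * sqnorm k z"
    and "0 < \<beta>" "\<beta> * r < 1"
  shows "strictly_accretive k (\<lambda>i j. id_fun i j + complex_of_real \<beta> * strict_upper_part bi X i j)"
  unfolding strictly_accretive_def Re_qform_shifted_upper[OF herm]
proof (intro allI impI)
  fix y assume "nonzero_vec k y"
  have "Re (qform k (block_diag_part bi X) y) \<le> r * sqnorm k y"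
    by (rule Re_qform_block_diag_le) (use bound in \<open>simp add: abs_le_iff\<close>)
  then have "Re (qform k X y) - Re (qform k (block_diag_part bi X) y) \<ge> - 2 * (r * sqnorm k y)"
    using bound[of y] by (simp add: abs_le_iff)
  then have "\<beta> * (Re (qform k X y) - Re (qform k (block_diag_part bi X) y)) \<ge> - 2 * (\<beta> * r * sqnorm k y)"
    using mult_left_mono[OF _ less_imp_le[OF \<open>0 < \<beta>\<close>]] by fastforce
  moreover have "\<beta> * r * sqnorm k y < sqnorm k y"
    using sqnorm_pos[OF \<open>nonzero_vec k y\<close>] \<open>\<beta> * r < 1\<close> by simp
  ultimately show "0 < sqnorm k y + \<beta> * (Re (qform k X y) - Re (qform k (block_diag_part bi X) y)) / 2"
    by linarith
qed

lemma ratio_lower_bound: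
  fixes a b r v d :: real
  assumes "0 < a" "0 < b" "0 < r" "b * r < 1" "0 < v" "d \<le> r * a" "v \<le> r * a"
  shows "1/2 + (1 - b * r) / (b * r) \<le> (a + b * (v - d) / 2) / (b * v)"
proof -
  have "v * (1 - b * r) \<le> r * a * (1 - b * r)"
    using assms(4,7) by (intro mult_right_mono) auto
  then have "v * (1 - b * r) / r \<le> a * (1 - b * r)"
    by (subst pos_divide_le_eq[OF assms(3)]) (simp add: ac_simps)
  have "(1/2 + (1 - b * r) / (b * r)) * (b * v) = v * (1 - b * r) / r + b * v / 2"
    using assms(2,3) by (simp add: field_simps)
  also have "\<dots> \<le> a * (1 - b * r) + b * v / 2"
    using \<open>v * (1 - b * r) / r \<le> a * (1 - b * r)\<close> by simp
  also have "\<dots> \<le> a + b * (v - d) / 2"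
  proof -
    have "b * d \<le> a * b * r" and "0 \<le> a * b * r"
      using mult_left_mono[OF assms(6), of b] assms(1-3) by (simp_all add: ac_simps)
    moreover have "a * (1 - b * r) = a - a * b * r" and "b * (v - d) = b * v - b * d"
      by (simp_all add: algebra_simps)
    ultimately show ?thesis by linarith
  qed
  finally show ?thesis using assms(2,5) by (simp add: le_divide_eq)
qed

section \<open>The estimate\<close>

lemma Re_inverse_ge:
  fixes \<mu> \<kappa> :: complex and a v d \<beta> r :: real
  assumes eq: "\<mu> * \<kappa> = complex_of_real (\<beta> * v)" and Re_\<kappa>: "Re \<kappa> = a + \<beta> * (v - d) / 2"
    and "0 < Re \<kappa>" "0 < Re \<mu>" "0 < a" "d \<le> r * a" "v \<le> r * a" "0 < \<beta>" "0 < r" "\<beta> * r < 1"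
  shows "1/2 + (1 - \<beta> * r) / (\<beta> * r) \<le> Re (1 / \<mu>)"
proof -
  have "\<mu> \<noteq> 0" using \<open>0 < Re \<mu>\<close> by auto
  then have "\<kappa> = complex_of_real (\<beta> * v) / \<mu>" using eq by (simp add: field_simps)
  then have "Re \<kappa> * ((Re \<mu>)\<^sup>2 + (Im \<mu>)\<^sup>2) = \<beta> * v * Re \<mu>"
    using \<open>\<mu> \<noteq> 0\<close> by (simp add: Re_divide complex_eq_iff)
  moreover have "0 < Re \<kappa> * ((Re \<mu>)\<^sup>2 + (Im \<mu>)\<^sup>2)"
    using \<open>0 < Re \<kappa>\<close> \<open>0 < Re \<mu>\<close> by (simp add: add_pos_nonneg)
  ultimately have "0 < v" using \<open>0 < \<beta>\<close> \<open>0 < Re \<mu>\<close> by (simp add: zero_less_mult_iff)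
  have "1 / \<mu> = \<kappa> / complex_of_real (\<beta> * v)"
    using eq \<open>\<mu> \<noteq> 0\<close> \<open>0 < v\<close> \<open>0 < \<beta>\<close> by (simp add: field_simps)
  then have "Re (1 / \<mu>) = (a + \<beta> * (v - d) / 2) / (\<beta> * v)"
    by (simp only: Re_divide_of_real Re_\<kappa>)
  with ratio_lower_bound[OF _ _ _ _ \<open>0 < v\<close>] assms(5-) show ?thesis by simp
qed

lemma Re_inverse_pencil_eigenvalue_ge:
  assumes herm: "hermitian_fun k X" and bound: "\<And>z. \<bar>Re (qform k X z)\<bar> \<le> r * sqnorm k z"
    and "0 < \<beta>" "0 < r" "\<beta> * r < 1" and y: "nonzero_vec k y" and "0 < Re \<mu>"
    and eig: "\<forall>i<k. matvec k (\<lambda>i j. complex_of_real \<beta> * X i j) y i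
      = \<mu> * matvec k (\<lambda>i j. id_fun i j + complex_of_real \<beta> * strict_upper_part bi X i j) y i"
  shows "1/2 + (1 - \<beta> * r) / (\<beta> * r) \<le> Re (1 / \<mu>)"
proof (rule Re_inverse_ge)
  let ?K = "\<lambda>i j. id_fun i j + complex_of_real \<beta> * strict_upper_part bi X i j"
  have "\<mu> * qform k ?K y = complex_of_real \<beta> * qform k X y"
    unfolding qform_eq_sum_matvec sum_distrib_left using eig
    by (intro sum.cong) (simp_all add: matvec_scale mult_ac)
  also have "qform k X y = complex_of_real (Re (qform k X y))" by (rule hermitian_qform_real[OF herm])
  finally show "\<mu> * qform k ?K y = complex_of_real (\<beta> * Re (qform k X y))" by simp
  show "0 < Re (qform k ?K y)"
    using strictly_accretive_shifted_upper[OF herm bound \<open>0 < \<beta>\<close> \<open>\<beta> * r < 1\<close>] y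
    unfolding strictly_accretive_def by blast
  show "Re (qform k (block_diag_part bi X) y) \<le> r * sqnorm k y"
    by (rule Re_qform_block_diag_le) (use bound in \<open>simp add: abs_le_iff\<close>)
  show "Re (qform k X y) \<le> r * sqnorm k y" using bound[of y] by (simp add: abs_le_iff)
qed (use assms Re_qform_shifted_upper[OF herm] sqnorm_pos[OF y] in simp_all)

lemma eigenvalue_of_real_inverse_pencil:
  fixes K B :: "real mat"
  assumes K: "K \<in> carrier_mat n n" and B: "B \<in> carrier_mat n n"
    and Kf: "\<And>i j. i < n \<Longrightarrow> j < n \<Longrightarrow> complex_of_real (K $$ (i, j)) = Kf i j"
    and acc: "strictly_accretive n Kf" and y: "nonzero_vec n y"
    and eig: "\<forall>i<n. matvec n (\<lambda>i j. complex_of_real c * entries (map_mat complex_of_real B) i j) y i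
      = \<mu> * matvec n Kf y i"
  shows "eigenvalue (map_mat complex_of_real (c \<cdot>\<^sub>m (inv_mat K * B))) \<mu>"
proof -
  let ?Kc = "map_mat complex_of_real K" and ?Bc = "map_mat complex_of_real (c \<cdot>\<^sub>m B)"
  have carrier: "?Kc \<in> carrier_mat n n" "?Bc \<in> carrier_mat n n" using K B by auto
  have entries_Kc: "entries ?Kc i j = Kf i j" if "i < n" "j < n" for i j
    using that K Kf unfolding entries_def by simp
  have "strictly_accretive n (entries ?Kc)"
    using acc unfolding strictly_accretive_def by (simp add: entries_Kc cong: qform_cong)
  then have "det K \<noteq> 0" using det_nonzero_if_strictly_accretive[OF carrier(1)] by simp
  note Ki = inv_mat_inverse[OF K this]
  have map_eq: "map_mat complex_of_real (c \<cdot>\<^sub>m (inv_mat K * B)) = map_mat complex_of_real (inv_mat K) * ?Bc"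
    using Ki(1) B
    by (simp add: mult_smult_distrib[symmetric] of_real_hom.mat_hom_mult[OF Ki(1) smult_carrier_mat[OF B]])
  have inv: "map_mat complex_of_real (inv_mat K) * ?Kc = 1\<^sub>m n"
    using Ki K by (simp add: of_real_hom.mat_hom_mult[symmetric] of_real_hom.mat_hom_one)
  have pencil: "?Bc *\<^sub>v vec n y = \<mu> \<cdot>\<^sub>v (?Kc *\<^sub>v vec n y)"
  proof -
    have "matvec n (entries ?Bc) (\<lambda>j. vec n y $ j) i = \<mu> * matvec n (entries ?Kc) (\<lambda>j. vec n y $ j) i"
      if "i < n" for i
    proof -
      have "matvec n (entries ?Bc) (\<lambda>j. vec n y $ j) i
          = matvec n (\<lambda>i j. complex_of_real c * entries (map_mat complex_of_real B) i j) y i"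
        using that B by (intro matvec_cong) (simp_all add: entries_def)
      also have "\<dots> = \<mu> * matvec n Kf y i" using eig that by simp
      also have "matvec n Kf y i = matvec n (entries ?Kc) (\<lambda>j. vec n y $ j) i"
        using that by (intro matvec_cong) (simp_all add: entries_Kc)
      finally show ?thesis .
    qed
    then show ?thesis using carrier by (simp add: pencil_vec_iff_matvec)
  qed
  have "vec n y \<noteq> 0\<^sub>v n" using y unfolding nonzero_vec_def by (auto simp: vec_eq_iff)
  with Ki(1) inv pencil show ?thesis
    unfolding map_eq by (intro eigenvalue_inverse_mult[OF carrier(1,2)]) auto
qed

lemma of_real_shifted_strict_block_upper:
  fixes B :: "real mat"
  assumes "B \<in> carrier_mat n n" "i < n" "j < n"
  shows "complex_of_real ((1\<^sub>m n + \<beta> \<cdot>\<^sub>m strict_block_upper ns B) $$ (i, j))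
    = id_fun i j + complex_of_real \<beta> * strict_upper_part (block_idx ns) (entries (map_mat complex_of_real B)) i j"
  using assms by (simp add: strict_block_upper_def strict_upper_part_def id_fun_def entries_def)

theorem lemma15:
  fixes ns :: "nat list" and n :: nat and B :: "real mat" and \<beta> :: real
  assumes "ns \<noteq> []" and "\<forall>s\<in>set ns. s > 0" and "n = sum_list ns"
    and "B \<in> carrier_mat n n" and "transpose_mat B = B"
    and "lambda_max B > 0"
    and "0 < \<beta>" and "\<beta> < 1 / rho B"
  shows "\<exists>lam::complex. lam \<noteq> 0 \<and>
     eigenvalue (map_mat complex_of_real
        (\<beta> \<cdot>\<^sub>m (inv_mat (1\<^sub>m n + \<beta> \<cdot>\<^sub>m strict_block_upper ns B) * B))) lam \<and>
     Re (1 / lam) \<ge> 1/2 + (1 - \<beta> * rho B) / (\<beta> * rho B)"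
proof -
  let ?X = "entries (map_mat complex_of_real B)"
  let ?K = "\<lambda>i j. id_fun i j + complex_of_real \<beta> * strict_upper_part (block_idx ns) ?X i j"
  have "0 < n" using assms(1-3) by (cases ns) auto
  have "0 < rho B" using assms(7,8) zero_less_divide_1_iff[of "rho B"] by linarith
  with assms(8) have "\<beta> * rho B < 1" by (simp add: less_divide_eq mult.commute)
  note herm = hermitian_of_real_symmetric[OF assms(4,5)]
  note bound = abs_qform_le_rho[OF assms(4,5)]
  note acc = strictly_accretive_shifted_upper[OF herm bound assms(7) \<open>\<beta> * rho B < 1\<close>]
  obtain v where "0 < Re (qform n ?X v)"
    using qform_pos_if_lambda_max_pos[OF assms(4,5) \<open>0 < n\<close> assms(6)] by blast
  then have "0 < Re (qform n (\<lambda>i j. complex_of_real \<beta> * ?X i j) v)"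
    using assms(7) by (simp add: qform_scale)
  moreover have "hermitian_fun n (\<lambda>i j. complex_of_real \<beta> * ?X i j)"
    using herm unfolding hermitian_fun_cnj by simp
  ultimately obtain \<mu> y where \<mu>: "0 < Re \<mu>" and y: "nonzero_vec n y"
    and eig: "\<forall>i<n. matvec n (\<lambda>i j. complex_of_real \<beta> * ?X i j) y i = \<mu> * matvec n ?K y i"
    using hermitian_pencil_eigenvalue_Re_pos[OF _ acc] by blast
  have "eigenvalue (map_mat complex_of_real
      (\<beta> \<cdot>\<^sub>m (inv_mat (1\<^sub>m n + \<beta> \<cdot>\<^sub>m strict_block_upper ns B) * B))) \<mu>"
    by (rule eigenvalue_of_real_inverse_pencil[OF _ assms(4) _ acc y eig])
      (use assms(4) of_real_shifted_strict_block_upper in \<open>auto simp: strict_block_upper_def\<close>)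
  moreover have "1/2 + (1 - \<beta> * rho B) / (\<beta> * rho B) \<le> Re (1 / \<mu>)"
    using Re_inverse_pencil_eigenvalue_ge[OF herm bound assms(7) \<open>0 < rho B\<close> \<open>\<beta> * rho B < 1\<close> y \<mu> eig] .
  ultimately show ?thesis using \<mu> by (intro exI[of _ \<mu>]) auto
qed

end
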